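(* Let $X$ be an uncountable Polish space. Then \[ \mathscr{L}_X(\mathsf{r})=\mathscr{L}_X(\mathcal{R})=\Sigma^1_1(X), \] where $\Sigma^1_1(X)$ is the family of all analytic subsets of $X$. Moreover, for every nonempty analytic set $C\subseteq X$ there exists a sequence $y=(y_{\{n,m\}})_{\{n,m\}\in[\omega]^2}\in X^{[\omega]^2}$ such that $C=\Lambda_y(\mathsf{r})=\Lambda_y(\mathcal{R})$.
   Context: $\omega$ denotes the set of nonnegative integers; $[D]^2$ is the family of 2-element subsets of $D$, $[D]^\omega$ the family of infinite subsets, $\mathrm{FIN}$ the finite subsets. The Ramsey map is $\mathsf{r}:[\omega]^\omega\to[[\omega]^2]^\omega$, $\mathsf{r}(D)=[D]^2$. The Ramsey ideal $\mathcal{R}$ on $[\omega]^2$ is the family of all $S\subseteq[\omega]^2$ such that $[D]^2\not\subseteq S$ for every infinite $D\subseteq\omega$. For a sequence $y:[\omega]^2\to X$ in a topological space $X$: $\eta\in X$ is an $\mathsf{r}$-limit point of $y$ if there is an infinite $D\subseteq\omega$ such that for every neighborhood $U$ of $\eta$ there is a finite $K\subseteq\omega$ with $y_{\{n,m\}}\in U$ for all $\{n,m\}\in[D\setminus K]^2$; $\Lambda_y(\mathsf{r})$ is the set of such points. $\eta$ is an $\mathcal{R}$-limit point of $y$ if there is $E\subseteq[\omega]^2$ with $E\notin\mathcal{R}$ such that the subsequence $(y_s)_{s\in E}$ converges to $\eta$ in the ordinary sense (for every neighborhood $U$ of $\eta$, $y_s\in U$ for all but finitely many $s\in E$); $\Lambda_y(\mathcal{R})$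 is the set of such points. $\mathscr{L}_X(\mathsf{r})=\{A\subseteq X:\exists y\in X^{[\omega]^2}\ A=\Lambda_y(\mathsf{r})\}\cup\{\emptyset\}$ and $\mathscr{L}_X(\mathcal{R})=\{A\subseteq X:\exists y\in X^{[\omega]^2}\ A=\Lambda_y(\mathcal{R})\}\cup\{\emptyset\}$. *)

theory Defs
  imports "HOL-Analysis.Analysis"
begin

text \<open>Two-element subsets of D, i.e. [D]^2. A sequence indexed by [omega]^2 is a
function on nat set; only its values on 2-element sets matter.\<close>
definition pairs2 :: "nat set \<Rightarrow> nat set set" where
  "pairs2 D = {s. s \<subseteq> D \<and> card s = 2}"

definition Ramsey_ideal :: "nat set set set" where
  "Ramsey_ideal = {S. S \<subseteq> pairs2 UNIV \<and> (\<forall>D. infinite D \<longrightarrow> \<not> pairs2 D \<subseteq> S)}"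

definition r_limit_points :: "(nat set \<Rightarrow> 'a::topological_space) \<Rightarrow> 'a set" where
  "r_limit_points y = {\<eta>. \<exists>D. infinite D \<and>
     (\<forall>U. open U \<and> \<eta> \<in> U \<longrightarrow> (\<exists>K. finite K \<and> (\<forall>s\<in>pairs2 (D - K). y s \<in> U)))}"

definition R_limit_points :: "(nat set \<Rightarrow> 'a::topological_space) \<Rightarrow> 'a set" where
  "R_limit_points y = {\<eta>. \<exists>E. E \<subseteq> pairs2 UNIV \<and> E \<notin> Ramsey_ideal \<and>
     (\<forall>U. open U \<and> \<eta> \<in> U \<longrightarrow> finite {s\<in>E. y s \<notin> U})}"

definition L_r :: "'a::topological_space set set" where
  "L_r = {A. \<exists>y. A = r_limit_points y} \<union> {{}}"

definition L_R :: "'a::topological_space set set" where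
  "L_R = {A. \<exists>y. A = R_limit_points y} \<union> {{}}"

definition analytic_set :: "'a::topological_space set \<Rightarrow> bool" where
  "analytic_set A \<longleftrightarrow> A = {} \<or> (\<exists>f::(nat \<Rightarrow> nat) \<Rightarrow> 'a. continuous_on UNIV f \<and> range f = A)"

end

theory Submission
  imports Defs "HOL-Library.Ramsey" "HOL-Library.Sublist" "HOL-Library.Nat_Bijection"
begin

text \<open>
  Every nonempty analytic set is the range of a continuous \<open>f\<close> on the Baire space. Code the
  nodes of the tree of finite sequences of naturals by natural numbers and let \<open>y {n, m}\<close>
  be \<open>f\<close> at the longer of the two nodes, extended by zeros, if the nodes are comparable,
  and \<open>f 0\<close> otherwise. Along the initial segments of \<open>\<beta>\<close> the sequence converges to
  \<open>f \<beta>\<close> in the strong (\<open>\<R>\<close>) sense, while Ramsey's theorem thins any infinite set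
  of nodes to a chain, along which \<open>y\<close> tends to \<open>f\<close> at the branch it determines, or to an
  antichain, on which \<open>y\<close> is constantly \<open>f 0\<close>; so both kinds of limit points of \<open>y\<close> form
  exactly the range of \<open>f\<close>.

  Conversely, in a complete metric space every \<open>r\<close>-limit (\<open>\<R>\<close>-limit) point \<open>\<eta>\<close> is the
  limit along an enumeration \<open>\<gamma>\<close> of an infinite set for which \<open>y {\<gamma> i, \<gamma> j}\<close>, \<open>i < j\<close>,
  lies within \<open>2\<^sup>-\<^sup>i\<close> (\<open>2\<^sup>-\<^sup>j\<close>) of \<open>\<eta>\<close>, and every such limit is a limit point. Stated
  as a Cauchy condition among the values, this property of \<open>\<gamma>\<close> no longer mentions \<open>\<eta>\<close>, so
  it cuts out a closed subset of the Baire space on which the limit depends uniformly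
  continuously on \<open>\<gamma>\<close>. Closed subsets being retracts, the limit points form a continuous
  image of the Baire space.
\<close>

section \<open>Convergence along pairs\<close>

lemma pairs2_iff: "s \<in> pairs2 D \<longleftrightarrow> (\<exists>a b. a \<in> D \<and> b \<in> D \<and> a \<noteq> b \<and> s = {a, b})"
  unfolding pairs2_def card_2_iff by auto

lemma pairs2_mono: "A \<subseteq> B \<Longrightarrow> pairs2 A \<subseteq> pairs2 B"
  unfolding pairs2_def by auto

lemma finite_pairs2: "finite A \<Longrightarrow> finite (pairs2 A)"
  unfolding pairs2_def by (rule finite_subset[of _ "Pow A"]) auto

lemma pairs2_range_cases:
  fixes \<gamma> :: "nat \<Rightarrow> nat"
  assumes "s \<in> pairs2 (range \<gamma>)"
  obtains i j where "i < j" "s = {\<gamma> i, \<gamma> j}"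
proof -
  obtain i j where ij: "s = {\<gamma> i, \<gamma> j}" "i \<noteq> j"
    using assms by (auto simp: pairs2_iff)
  show ?thesis
  proof (cases "i < j")
    case True
    with ij that show ?thesis by blast
  next
    case False
    with ij(2) have "j < i" by simp
    moreover have "s = {\<gamma> j, \<gamma> i}" using ij(1) by (simp add: insert_commute)
    ultimately show ?thesis by (rule that)
  qed
qed

definition r_tendsto :: "(nat set \<Rightarrow> 'a::topological_space) \<Rightarrow> nat set \<Rightarrow> 'a \<Rightarrow> bool" where
  "r_tendsto y D \<eta> \<longleftrightarrow>
     (\<forall>U. open U \<and> \<eta> \<in> U \<longrightarrow> (\<exists>K. finite K \<and> (\<forall>s\<in>pairs2 (D - K). y s \<in> U)))"

definition pairs_tendsto :: "(nat set \<Rightarrow> 'a::topological_space) \<Rightarrow> nat set \<Rightarrow> 'a \<Rightarrow> bool" where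
  "pairs_tendsto y D \<eta> \<longleftrightarrow> (\<forall>U. open U \<and> \<eta> \<in> U \<longrightarrow> finite {s\<in>pairs2 D. y s \<notin> U})"

lemma r_limit_points_eq: "r_limit_points y = {\<eta>. \<exists>D. infinite D \<and> r_tendsto y D \<eta>}"
  unfolding r_limit_points_def r_tendsto_def by auto

text \<open>An \<open>\<R>\<close>-positive set contains some \<open>[D]\<^sup>2\<close>, and convergence passes to subsets.\<close>
lemma R_limit_points_eq: "R_limit_points y = {\<eta>. \<exists>D. infinite D \<and> pairs_tendsto y D \<eta>}"
proof (intro set_eqI iffI)
  fix \<eta> assume "\<eta> \<in> R_limit_points y"
  then obtain E where E: "E \<notin> Ramsey_ideal" "E \<subseteq> pairs2 UNIV"
    and conv: "\<And>U. open U \<Longrightarrow> \<eta> \<in> U \<Longrightarrow> finite {s\<in>E. y s \<notin> U}"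
    unfolding R_limit_points_def by blast
  then obtain D where D: "infinite D" "pairs2 D \<subseteq> E"
    unfolding Ramsey_ideal_def by blast
  have "pairs_tendsto y D \<eta>"
    unfolding pairs_tendsto_def using D(2) by (blast intro: finite_subset[OF _ conv])
  with D(1) show "\<eta> \<in> {\<eta>. \<exists>D. infinite D \<and> pairs_tendsto y D \<eta>}" by blast
next
  fix \<eta> assume "\<eta> \<in> {\<eta>. \<exists>D. infinite D \<and> pairs_tendsto y D \<eta>}"
  then obtain D where D: "infinite D" "pairs_tendsto y D \<eta>" by blast
  have "pairs2 D \<subseteq> pairs2 UNIV" by (rule pairs2_mono) simp
  moreover have "pairs2 D \<notin> Ramsey_ideal"
    using D(1) unfolding Ramsey_ideal_def by blast
  ultimately show "\<eta> \<in> R_limit_points y"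
    using D(2) unfolding R_limit_points_def pairs_tendsto_def by blast
qed

lemma pairs_tendsto_imp_r_tendsto:
  assumes "pairs_tendsto y D \<eta>"
  shows "r_tendsto y D \<eta>"
  unfolding r_tendsto_def
proof (intro allI impI)
  fix U assume "open U \<and> \<eta> \<in> U"
  then have "finite {s\<in>pairs2 D. y s \<notin> U}" (is "finite ?Bad")
    using assms unfolding pairs_tendsto_def by blast
  moreover have "finite s" if "s \<in> ?Bad" for s
    using that by (auto simp: pairs2_iff)
  moreover have "y s \<in> U" if s: "s \<in> pairs2 (D - \<Union>?Bad)" for s
  proof (rule ccontr)
    assume "y s \<notin> U"
    with s have "s \<in> ?Bad" using pairs2_mono[of "D - \<Union>?Bad" D] by blast
    with s show False by (auto simp: pairs2_iff)
  qed
  ultimately show "\<exists>K. finite K \<and> (\<forall>s\<in>pairs2 (D - K). y s \<in> U)"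
    by blast
qed

lemma R_limit_points_subset_r_limit_points: "R_limit_points y \<subseteq> r_limit_points y"
  unfolding R_limit_points_eq r_limit_points_eq using pairs_tendsto_imp_r_tendsto by blast

lemma r_tendsto_subset: "r_tendsto y D \<eta> \<Longrightarrow> D' \<subseteq> D \<Longrightarrow> r_tendsto y D' \<eta>"
  unfolding r_tendsto_def by (meson Diff_mono order_refl pairs2_mono subsetD)

lemma r_tendsto_const:
  assumes "\<And>s. s \<in> pairs2 D \<Longrightarrow> y s = c"
  shows "r_tendsto y D c"
  unfolding r_tendsto_def using assms by (intro allI impI exI[of _ "{}"]) auto

lemma r_tendsto_unique:
  fixes y :: "nat set \<Rightarrow> 'a::t2_space"
  assumes "infinite D" "r_tendsto y D a" "r_tendsto y D b"
  shows "a = b"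
proof (rule ccontr)
  assume "a \<noteq> b"
  then obtain U V where UV: "open U" "open V" "a \<in> U" "b \<in> V" "U \<inter> V = {}"
    by (metis hausdorff)
  obtain K where K: "finite K" "\<forall>s\<in>pairs2 (D - K). y s \<in> U"
    using assms(2) UV(1,3) unfolding r_tendsto_def by auto
  obtain L where L: "finite L" "\<forall>s\<in>pairs2 (D - L). y s \<in> V"
    using assms(3) UV(2,4) unfolding r_tendsto_def by auto
  have inf: "infinite (D - (K \<union> L))"
    using assms(1) K(1) L(1) by simp
  then obtain p where p: "p \<in> D - (K \<union> L)"
    using infinite_imp_nonempty by blast
  from inf have "infinite (D - (K \<union> L) - {p})" by simp
  then obtain q where "q \<in> D - (K \<union> L) - {p}"
    using infinite_imp_nonempty by blast
  with p have "{p, q} \<in> pairs2 (D - K)" "{p, q} \<in> pairs2 (D - L)"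
    by (auto simp: pairs2_iff)
  with K(2) L(2) have "y {p, q} \<in> U \<inter> V" by blast
  with UV(5) show False by simp
qed

section \<open>Initial segments and the Baire space\<close>

definition initial_segment :: "nat \<Rightarrow> (nat \<Rightarrow> 'a) \<Rightarrow> 'a list" where
  "initial_segment n \<gamma> = map \<gamma> [0..<n]"

lemma length_initial_segment [simp]: "length (initial_segment n \<gamma>) = n"
  by (simp add: initial_segment_def)

lemma nth_initial_segment [simp]: "i < n \<Longrightarrow> initial_segment n \<gamma> ! i = \<gamma> i"
  by (simp add: initial_segment_def)

lemma initial_segment_Suc: "initial_segment (Suc n) \<gamma> = initial_segment n \<gamma> @ [\<gamma> n]"
  by (simp add: initial_segment_def)

lemma initial_segment_eq_iff:
  "initial_segment n \<gamma> = initial_segment n \<delta> \<longleftrightarrow> (\<forall>i<n. \<gamma> i = \<delta> i)"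
  by (auto simp: initial_segment_def)

lemma take_initial_segment: "m \<le> n \<Longrightarrow> take m (initial_segment n \<gamma>) = initial_segment m \<gamma>"
  by (simp add: initial_segment_def take_map)

lemma prefix_initial_segment: "m \<le> n \<Longrightarrow> prefix (initial_segment m \<gamma>) (initial_segment n \<gamma>)"
  unfolding initial_segment_def prefix_def
  by (metis le_add_diff_inverse map_append upt_add_eq_append zero_le)

lemma open_initial_segment_eq:
  "open {\<gamma> :: nat \<Rightarrow> 'a::discrete_topology. initial_segment n \<gamma> = initial_segment n \<beta>}"
proof -
  have "open {\<gamma> :: nat \<Rightarrow> 'a. \<forall>i\<in>{..<n}. \<gamma> (id i) \<in> {\<beta> i}}"
    by (rule product_topology_basis') (auto simp: open_discrete)
  then show ?thesis by (simp add: initial_segment_eq_iff lessThan_def)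
qed

lemma open_contains_initial_segment_nbhd:
  fixes U :: "(nat \<Rightarrow> 'a::topological_space) set"
  assumes "open U" "\<beta> \<in> U"
  obtains n where "{\<gamma>. initial_segment n \<gamma> = initial_segment n \<beta>} \<subseteq> U"
proof -
  have "openin (product_topology (\<lambda>_. euclidean) UNIV) U"
    using assms(1) unfolding open_fun_def .
  from product_topology_open_contains_basis[OF this assms(2)] obtain X where
    X: "\<beta> \<in> (\<Pi>\<^sub>E i\<in>UNIV. X i)" "finite {i. X i \<noteq> UNIV}" "(\<Pi>\<^sub>E i\<in>UNIV. X i) \<subseteq> U"
    by auto
  obtain n where n: "\<And>i. X i \<noteq> UNIV \<Longrightarrow> i < n"
    using finite_nat_bounded[OF X(2)] by auto
  have "\<gamma> \<in> (\<Pi>\<^sub>E i\<in>UNIV. X i)" if "initial_segment n \<gamma> = initial_segment n \<beta>" for \<gamma>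
  proof -
    have "\<gamma> i \<in> X i" for i
    proof (cases "i < n")
      case True
      with that have "\<gamma> i = \<beta> i" by (simp add: initial_segment_eq_iff)
      with X(1) show ?thesis by auto
    next
      case False
      with n show ?thesis by blast
    qed
    then show ?thesis by (simp add: PiE_iff)
  qed
  then have "{\<gamma>. initial_segment n \<gamma> = initial_segment n \<beta>} \<subseteq> U"
    using X(3) by blast
  then show ?thesis by (rule that)
qed

lemma continuous_on_initial_segment_nbhd:
  fixes f :: "(nat \<Rightarrow> 'a::topological_space) \<Rightarrow> 'b::topological_space"
  assumes "continuous_on UNIV f" "open U" "f \<beta> \<in> U"
  obtains n where "\<And>\<gamma>. initial_segment n \<gamma> = initial_segment n \<beta> \<Longrightarrow> f \<gamma> \<in> U"
proof -
  have "open (f -` U)"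
    using assms(1,2) by (simp add: continuous_on_open_vimage)
  moreover have "\<beta> \<in> f -` U"
    using assms(3) by simp
  ultimately obtain n where "{\<gamma>. initial_segment n \<gamma> = initial_segment n \<beta>} \<subseteq> f -` U"
    by (rule open_contains_initial_segment_nbhd)
  with that show ?thesis by blast
qed

section \<open>Realising a continuous image of the Baire space\<close>

definition zero_extend :: "nat list \<Rightarrow> nat \<Rightarrow> nat" where
  "zero_extend l k = (if k < length l then l ! k else 0)"

lemma initial_segment_zero_extend: "n \<le> length l \<Longrightarrow> initial_segment n (zero_extend l) = take n l"
  by (simp add: initial_segment_def zero_extend_def list_eq_iff_nth_eq)

definition join_branch :: "nat list \<Rightarrow> nat list \<Rightarrow> nat \<Rightarrow> nat" where
  "join_branch l m =
     (if prefix l m then zero_extend m else if prefix m l then zero_extend l else (\<lambda>_. 0))"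

lemma join_branch_commute: "join_branch l m = join_branch m l"
  unfolding join_branch_def by (auto dest: prefix_order.antisym)

lemma join_branch_parallel: "l \<parallel> m \<Longrightarrow> join_branch l m = (\<lambda>_. 0)"
  unfolding join_branch_def by auto

lemma initial_segment_join_branch:
  assumes "l = initial_segment (length l) \<beta>" "m = initial_segment (length m) \<beta>"
    and "n \<le> max (length l) (length m)"
  shows "initial_segment n (join_branch l m) = initial_segment n \<beta>"
proof -
  have "initial_segment n (join_branch l m) = initial_segment n \<beta>"
    if "l = initial_segment (length l) \<beta>" "m = initial_segment (length m) \<beta>"
      and "length l \<le> length m" "n \<le> length m" for l m
  proof -
    have "prefix l m"
      using that(1-3) prefix_initial_segment by metis
    then have "join_branch l m = zero_extend m"
      by (simp add: join_branch_def)
    with that(2,4) show ?thesis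
      by (metis initial_segment_zero_extend take_initial_segment)
  qed
  from this[of l m] this[of m l] assms show ?thesis
    by (cases "length l \<le> length m") (auto simp: join_branch_commute)
qed

definition tree_sequence :: "((nat \<Rightarrow> nat) \<Rightarrow> 'a) \<Rightarrow> nat set \<Rightarrow> 'a" where
  "tree_sequence f s = f (join_branch (list_decode (Min s)) (list_decode (Max s)))"

lemma tree_sequence_pair: "tree_sequence f {a, b} = f (join_branch (list_decode a) (list_decode b))"
  unfolding tree_sequence_def by (cases "a \<le> b") (auto simp: join_branch_commute max_def min_def)

lemma in_R_limit_points_tree_sequence:
  assumes "continuous_on UNIV f"
  shows "f \<beta> \<in> R_limit_points (tree_sequence f)"
proof -
  define d where "d j = list_encode (initial_segment j \<beta>)" for j
  have "inj d"
    by (rule injI) (metis d_def length_initial_segment list_encode_eq)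
  then have inf: "infinite (range d)"
    by (rule range_inj_infinite)
  have "pairs_tendsto (tree_sequence f) (range d) (f \<beta>)"
    unfolding pairs_tendsto_def
  proof (intro allI impI)
    fix U assume "open U \<and> f \<beta> \<in> U"
    then obtain N where N: "\<And>\<gamma>. initial_segment N \<gamma> = initial_segment N \<beta> \<Longrightarrow> f \<gamma> \<in> U"
      using continuous_on_initial_segment_nbhd[OF assms] by blast
    have "s \<in> pairs2 (d ` {..<N})" if s: "s \<in> pairs2 (range d)" "tree_sequence f s \<notin> U" for s
    proof -
      obtain i j where ij: "i < j" "s = {d i, d j}"
        using s(1) by (rule pairs2_range_cases)
      have "tree_sequence f s = f (join_branch (initial_segment i \<beta>) (initial_segment j \<beta>))"
        by (simp add: ij(2) d_def tree_sequence_pair)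
      with s(2) N have "\<not> N \<le> j"
        by (metis initial_segment_join_branch length_initial_segment max.coboundedI2)
      with ij s(1) show ?thesis
        by (auto simp: pairs2_def)
    qed
    then have "{s\<in>pairs2 (range d). tree_sequence f s \<notin> U} \<subseteq> pairs2 (d ` {..<N})"
      by blast
    then show "finite {s\<in>pairs2 (range d). tree_sequence f s \<notin> U}"
      by (rule finite_subset) (simp add: finite_pairs2)
  qed
  with inf show ?thesis
    unfolding R_limit_points_eq by blast
qed

lemma prefix_chain_inj_on_length:
  assumes "\<And>l m. l \<in> L \<Longrightarrow> m \<in> L \<Longrightarrow> prefix l m \<or> prefix m l"
  shows "inj_on length L"
  using assms by (fastforce simp: inj_on_def prefix_def)

lemma finite_prefix_chain_bounded_length:
  assumes "\<And>l m. l \<in> L \<Longrightarrow> m \<in> L \<Longrightarrow> prefix l m \<or> prefix m l"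
  shows "finite {l\<in>L. length l \<le> n}"
proof -
  have "inj_on length {l\<in>L. length l \<le> n}"
    using prefix_chain_inj_on_length[OF assms] by (rule inj_on_subset) auto
  moreover have "length ` {l\<in>L. length l \<le> n} \<subseteq> {..n}"
    by auto
  ultimately show ?thesis
    by (metis finite_atMost finite_imageD finite_subset)
qed

lemma infinite_prefix_chain_branch:
  assumes "infinite L" and chain: "\<And>l m. l \<in> L \<Longrightarrow> m \<in> L \<Longrightarrow> prefix l m \<or> prefix m l"
  obtains \<beta> where "\<And>l. l \<in> L \<Longrightarrow> l = initial_segment (length l) \<beta>"
proof -
  have long: "\<exists>l\<in>L. k < length l" for k
  proof (rule ccontr)
    assume "\<not> ?thesis"
    then have "L = {l\<in>L. length l \<le> k}"
      by auto
    with assms show False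
      using finite_prefix_chain_bounded_length by metis
  qed
  define \<beta> where "\<beta> k = (SOME l. l \<in> L \<and> k < length l) ! k" for k
  have "l ! k = \<beta> k" if "l \<in> L" "k < length l" for l k
  proof -
    let ?m = "SOME l. l \<in> L \<and> k < length l"
    have m: "?m \<in> L" "k < length ?m"
      using someI_ex[OF long[of k, unfolded Bex_def]] by auto
    from chain[OF that(1) m(1)] that(2) m(2) have "l ! k = ?m ! k"
      by (auto simp: prefix_def nth_append)
    then show ?thesis
      by (simp add: \<beta>_def)
  qed
  then have "l = initial_segment (length l) \<beta>" if "l \<in> L" for l
    using that by (intro nth_equalityI) auto
  then show ?thesis
    by (rule that)
qed

lemma r_tendsto_tree_sequence_chain:
  assumes "continuous_on UNIV f" "infinite Y"
    and chain: "\<And>a b. a \<in> Y \<Longrightarrow> b \<in> Y \<Longrightarrow>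
      prefix (list_decode a) (list_decode b) \<or> prefix (list_decode b) (list_decode a)"
  obtains \<beta> where "r_tendsto (tree_sequence f) Y (f \<beta>)"
proof -
  let ?L = "list_decode ` Y"
  have chain_L: "\<And>l m. l \<in> ?L \<Longrightarrow> m \<in> ?L \<Longrightarrow> prefix l m \<or> prefix m l"
    using chain by blast
  have "infinite ?L"
    using assms(2) by (simp add: finite_image_iff inj_list_decode)
  then obtain \<beta> where \<beta>: "\<And>l. l \<in> ?L \<Longrightarrow> l = initial_segment (length l) \<beta>"
    using infinite_prefix_chain_branch chain_L by blast
  have "r_tendsto (tree_sequence f) Y (f \<beta>)"
    unfolding r_tendsto_def
  proof (intro allI impI)
    fix U assume "open U \<and> f \<beta> \<in> U"
    then obtain N where N: "\<And>\<gamma>. initial_segment N \<gamma> = initial_segment N \<beta> \<Longrightarrow> f \<gamma> \<in> U"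
      using continuous_on_initial_segment_nbhd[OF assms(1)] by blast
    let ?K = "{a\<in>Y. length (list_decode a) \<le> N}"
    have "?K \<subseteq> list_decode -` {l\<in>?L. length l \<le> N}"
      by auto
    then have "finite ?K"
      using finite_vimageI[OF finite_prefix_chain_bounded_length[OF chain_L] inj_list_decode]
      by (rule finite_subset)
    moreover have "tree_sequence f s \<in> U" if "s \<in> pairs2 (Y - ?K)" for s
    proof -
      obtain a b where ab: "a \<in> Y - ?K" "b \<in> Y - ?K" "s = {a, b}"
        using \<open>s \<in> pairs2 (Y - ?K)\<close> by (auto simp: pairs2_iff)
      then have "initial_segment N (join_branch (list_decode a) (list_decode b)) = initial_segment N \<beta>"
        using \<beta> by (intro initial_segment_join_branch) auto
      with N ab(3) show ?thesis
        by (simp add: tree_sequence_pair)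
    qed
    ultimately show "\<exists>K. finite K \<and> (\<forall>s\<in>pairs2 (Y - K). tree_sequence f s \<in> U)"
      by blast
  qed
  then show ?thesis
    by (rule that)
qed

lemma r_tendsto_tree_sequence_antichain:
  assumes "\<And>a b. a \<in> Y \<Longrightarrow> b \<in> Y \<Longrightarrow> a \<noteq> b \<Longrightarrow> list_decode a \<parallel> list_decode b"
  shows "r_tendsto (tree_sequence f) Y (f (\<lambda>_. 0))"
proof (rule r_tendsto_const)
  fix s assume "s \<in> pairs2 Y"
  then obtain a b where "a \<in> Y" "b \<in> Y" "a \<noteq> b" "s = {a, b}"
    by (auto simp: pairs2_iff)
  with assms show "tree_sequence f s = f (\<lambda>_. 0)"
    by (simp add: tree_sequence_pair join_branch_parallel)
qed

lemma Ramsey_prefix_chain_or_antichain: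
  fixes g :: "'a \<Rightarrow> 'b list"
  assumes "infinite D"
  obtains Y where "Y \<subseteq> D" "infinite Y" "\<And>a b. a \<in> Y \<Longrightarrow> b \<in> Y \<Longrightarrow> prefix (g a) (g b) \<or> prefix (g b) (g a)"
    | Y where "Y \<subseteq> D" "infinite Y" "\<And>a b. a \<in> Y \<Longrightarrow> b \<in> Y \<Longrightarrow> a \<noteq> b \<Longrightarrow> g a \<parallel> g b"
proof -
  define colour where "colour s = (if \<exists>a\<in>s. \<exists>b\<in>s. g a \<parallel> g b then 1 else 0 :: nat)" for s
  have colour_pair: "colour {a, b} = (if g a \<parallel> g b then 1 else 0)" for a b
    unfolding colour_def by (auto simp: parallel_def)
  have "\<forall>a\<in>D. \<forall>b\<in>D. a \<noteq> b \<longrightarrow> colour {a, b} < 2"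
    by (simp add: colour_pair)
  from Ramsey2[OF assms this] obtain Y t where Y: "Y \<subseteq> D" "infinite Y" "t < 2"
    and homogeneous: "\<And>a b. a \<in> Y \<Longrightarrow> b \<in> Y \<Longrightarrow> a \<noteq> b \<Longrightarrow> colour {a, b} = t"
    by blast
  consider "t = 0" | "t = 1"
    using Y(3) by linarith
  then show ?thesis
  proof cases
    case 1
    have "prefix (g a) (g b) \<or> prefix (g b) (g a)" if "a \<in> Y" "b \<in> Y" for a b
    proof (cases "a = b")
      case False
      with homogeneous[OF that] 1 show ?thesis
        by (simp add: colour_pair parallel_def split: if_splits)
    qed simp
    with Y(1,2) show ?thesis
      by (rule that(1))
  next
    case 2
    have "g a \<parallel> g b" if "a \<in> Y" "b \<in> Y" "a \<noteq> b" for a b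
    proof -
      have "colour {a, b} = 1"
        using homogeneous[OF that] 2 by simp
      then show ?thesis
        unfolding colour_pair by (metis zero_neq_one)
    qed
    with Y(1,2) show ?thesis
      by (rule that(2))
  qed
qed

lemma r_limit_points_tree_sequence_subset:
  fixes f :: "(nat \<Rightarrow> nat) \<Rightarrow> 'a::t2_space"
  assumes "continuous_on UNIV f"
  shows "r_limit_points (tree_sequence f) \<subseteq> range f"
proof
  fix \<eta> assume "\<eta> \<in> r_limit_points (tree_sequence f)"
  then obtain D where D: "infinite D" "r_tendsto (tree_sequence f) D \<eta>"
    unfolding r_limit_points_eq by blast
  obtain Y \<beta> where Y: "Y \<subseteq> D" "infinite Y" and "r_tendsto (tree_sequence f) Y (f \<beta>)"
  proof (rule Ramsey_prefix_chain_or_antichain[OF D(1), of list_decode])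
    fix Y assume "Y \<subseteq> D" "infinite Y"
      "\<And>a b. a \<in> Y \<Longrightarrow> b \<in> Y \<Longrightarrow> prefix (list_decode a) (list_decode b) \<or> prefix (list_decode b) (list_decode a)"
    with assms show ?thesis
      by (metis r_tendsto_tree_sequence_chain that)
  next
    fix Y assume "Y \<subseteq> D" "infinite Y" "\<And>a b. a \<in> Y \<Longrightarrow> b \<in> Y \<Longrightarrow> a \<noteq> b \<Longrightarrow> list_decode a \<parallel> list_decode b"
    then show ?thesis
      using r_tendsto_tree_sequence_antichain that by blast
  qed
  moreover have "r_tendsto (tree_sequence f) Y \<eta>"
    using D(2) Y(1) by (rule r_tendsto_subset)
  ultimately have "\<eta> = f \<beta>"
    using r_tendsto_unique by blast
  then show "\<eta> \<in> range f"
    by simp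
qed

lemma limit_points_tree_sequence:
  fixes f :: "(nat \<Rightarrow> nat) \<Rightarrow> 'a::t2_space"
  assumes "continuous_on UNIV f"
  shows "r_limit_points (tree_sequence f) = range f" "R_limit_points (tree_sequence f) = range f"
proof -
  have "range f \<subseteq> R_limit_points (tree_sequence f)"
    using in_R_limit_points_tree_sequence[OF assms] by blast
  with r_limit_points_tree_sequence_subset[OF assms]
    R_limit_points_subset_r_limit_points[of "tree_sequence f"]
  show "r_limit_points (tree_sequence f) = range f" "R_limit_points (tree_sequence f) = range f"
    by auto
qed

section \<open>Continuous images of closed subsets of the Baire space\<close>

text \<open>For the tree of initial segments of a closed set \<open>F\<close> this is a Lipschitz
  retraction onto \<open>F\<close>.\<close>
fun tree_walk :: "('a list \<Rightarrow> bool) \<Rightarrow> (nat \<Rightarrow> 'a) \<Rightarrow> nat \<Rightarrow> 'a list" where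
  "tree_walk T \<alpha> 0 = []"
| "tree_walk T \<alpha> (Suc k) =
     (if T (tree_walk T \<alpha> k @ [\<alpha> k]) then tree_walk T \<alpha> k @ [\<alpha> k]
      else tree_walk T \<alpha> k @ [SOME x. T (tree_walk T \<alpha> k @ [x])])"

definition tree_retraction :: "('a list \<Rightarrow> bool) \<Rightarrow> (nat \<Rightarrow> 'a) \<Rightarrow> nat \<Rightarrow> 'a" where
  "tree_retraction T \<alpha> k = tree_walk T \<alpha> (Suc k) ! k"

lemma length_tree_walk [simp]: "length (tree_walk T \<alpha> k) = k"
  by (induction k) auto

lemma tree_walk_Suc_retraction: "tree_walk T \<alpha> (Suc k) = tree_walk T \<alpha> k @ [tree_retraction T \<alpha> k]"
  by (simp add: tree_retraction_def nth_append)

lemma tree_walk_in_tree: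
  assumes "T []" "\<And>s. T s \<Longrightarrow> \<exists>x. T (s @ [x])"
  shows "T (tree_walk T \<alpha> k)"
proof (induction k)
  case (Suc k)
  then show ?case
    using assms(2)[OF Suc] by (auto intro: someI_ex)
qed (simp add: assms(1))

lemma tree_walk_cong:
  "initial_segment k \<alpha> = initial_segment k \<beta> \<Longrightarrow> tree_walk T \<alpha> k = tree_walk T \<beta> k"
  by (induction k) (auto simp: initial_segment_Suc)

lemma tree_walk_branch:
  assumes "\<And>k. T (initial_segment k \<alpha>)"
  shows "tree_walk T \<alpha> k = initial_segment k \<alpha>"
proof (induction k)
  case (Suc k)
  have "T (initial_segment k \<alpha> @ [\<alpha> k])"
    using assms[of "Suc k"] by (simp add: initial_segment_Suc)
  with Suc show ?case
    by (simp add: initial_segment_Suc)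
qed (simp add: initial_segment_def)

lemma initial_segment_tree_retraction: "initial_segment k (tree_retraction T \<alpha>) = tree_walk T \<alpha> k"
  by (induction k)
    (simp_all add: initial_segment_Suc tree_walk_Suc_retraction del: tree_walk.simps(2),
     simp add: initial_segment_def)

lemma closed_baire_retraction:
  fixes F :: "(nat \<Rightarrow> 'a) set"
  assumes "F \<noteq> {}"
    and closed: "\<And>\<gamma>. (\<And>n. \<exists>\<delta>\<in>F. initial_segment n \<delta> = initial_segment n \<gamma>) \<Longrightarrow> \<gamma> \<in> F"
  obtains r where "\<And>\<alpha>. r \<alpha> \<in> F" "\<And>\<gamma>. \<gamma> \<in> F \<Longrightarrow> r \<gamma> = \<gamma>"
    "\<And>n \<alpha> \<beta>. initial_segment n \<alpha> = initial_segment n \<beta> \<Longrightarrow>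
      initial_segment n (r \<alpha>) = initial_segment n (r \<beta>)"
proof
  define T where "T s \<longleftrightarrow> (\<exists>\<delta>\<in>F. initial_segment (length s) \<delta> = s)" for s
  have "T []"
    using assms(1) by (auto simp: T_def initial_segment_def)
  moreover have "\<exists>x. T (s @ [x])" if "T s" for s
  proof -
    from that obtain \<delta> where "\<delta> \<in> F" "initial_segment (length s) \<delta> = s"
      unfolding T_def by blast
    then have "T (s @ [\<delta> (length s)])"
      unfolding T_def by (metis initial_segment_Suc length_append_singleton)
    then show ?thesis ..
  qed
  ultimately have "T (tree_walk T \<alpha> n)" for \<alpha> n
    by (rule tree_walk_in_tree)
  then show "tree_retraction T \<alpha> \<in> F" for \<alpha>
    by (intro closed) (auto simp: T_def initial_segment_tree_retraction)
  show "tree_retraction T \<gamma> = \<gamma>" if "\<gamma> \<in> F" for \<gamma>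
  proof
    fix k
    have "tree_walk T \<gamma> (Suc k) = initial_segment (Suc k) \<gamma>"
      using that by (intro tree_walk_branch) (auto simp: T_def)
    then show "tree_retraction T \<gamma> k = \<gamma> k"
      by (simp add: tree_retraction_def)
  qed
  show "initial_segment n (tree_retraction T \<alpha>) = initial_segment n (tree_retraction T \<beta>)"
    if "initial_segment n \<alpha> = initial_segment n \<beta>" for n \<alpha> \<beta>
    unfolding initial_segment_tree_retraction using that by (rule tree_walk_cong)
qed

lemma analytic_set_image_closed:
  fixes F :: "(nat \<Rightarrow> nat) set" and h :: "(nat \<Rightarrow> nat) \<Rightarrow> 'a::metric_space"
  assumes closed: "\<And>\<gamma>. (\<And>n. \<exists>\<delta>\<in>F. initial_segment n \<delta> = initial_segment n \<gamma>) \<Longrightarrow> \<gamma> \<in> F"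
    and uniform: "\<And>e. e > 0 \<Longrightarrow>
      \<exists>N. \<forall>\<gamma>\<in>F. \<forall>\<delta>\<in>F. initial_segment N \<gamma> = initial_segment N \<delta> \<longrightarrow> dist (h \<gamma>) (h \<delta>) < e"
  shows "analytic_set (h ` F)"
proof (cases "F = {}")
  case False
  then obtain r where r: "\<And>\<alpha>. r \<alpha> \<in> F" "\<And>\<gamma>. \<gamma> \<in> F \<Longrightarrow> r \<gamma> = \<gamma>"
    "\<And>n \<alpha> \<beta>. initial_segment n \<alpha> = initial_segment n \<beta> \<Longrightarrow>
      initial_segment n (r \<alpha>) = initial_segment n (r \<beta>)"
    using closed closed_baire_retraction by blast
  have "range (h \<circ> r) = h ` F"
    using r(1,2) by (auto simp: image_iff) (metis r(2))
  moreover have "continuous_on UNIV (h \<circ> r)"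
    unfolding continuous_on_topological
  proof (intro ballI allI impI)
    fix \<alpha> B assume "open B" "(h \<circ> r) \<alpha> \<in> B"
    then obtain e where e: "e > 0" "ball (h (r \<alpha>)) e \<subseteq> B"
      by (auto elim!: openE)
    obtain N where N: "\<forall>\<gamma>\<in>F. \<forall>\<delta>\<in>F. initial_segment N \<gamma> = initial_segment N \<delta> \<longrightarrow> dist (h \<gamma>) (h \<delta>) < e"
      using uniform[OF e(1)] by blast
    have "(h \<circ> r) \<beta> \<in> B" if "initial_segment N \<beta> = initial_segment N \<alpha>" for \<beta>
      using N r(1) r(3)[OF that] e(2) by (auto simp: dist_commute)
    then show "\<exists>A. open A \<and> \<alpha> \<in> A \<and> (\<forall>\<beta>\<in>UNIV. \<beta> \<in> A \<longrightarrow> (h \<circ> r) \<beta> \<in> B)"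
      by (intro exI[of _ "{\<beta>. initial_segment N \<beta> = initial_segment N \<alpha>}"])
        (simp add: open_initial_segment_eq)
  qed
  ultimately show ?thesis
    unfolding analytic_set_def by blast
qed (simp add: analytic_set_def)

section \<open>Limit points are analytic\<close>

lemma strict_mono_enumeration_beyond:
  fixes D :: "nat set" and K :: "nat \<Rightarrow> nat set"
  assumes "infinite D" "\<And>m. finite (K m)"
  obtains \<gamma> where "strict_mono \<gamma>" "\<And>m. \<gamma> m \<in> D" "\<And>m k. k \<in> K m \<Longrightarrow> k < \<gamma> m"
proof
  define \<phi> where "\<phi> m = Suc (m + (\<Sum>i\<le>m. Max (insert 0 (K i))))" for m
  have "strict_mono (enumerate D)"
    using assms(1) by (intro strict_monoI enumerate_mono)
  moreover have "strict_mono \<phi>"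
    unfolding strict_mono_Suc_iff \<phi>_def by simp
  ultimately show "strict_mono (enumerate D \<circ> \<phi>)"
    by (rule strict_mono_o)
  show "(enumerate D \<circ> \<phi>) m \<in> D" for m
    by (simp add: assms(1) enumerate_in_set)
  show "k < (enumerate D \<circ> \<phi>) m" if "k \<in> K m" for m k
  proof -
    have "k \<le> Max (insert 0 (K m))"
      using assms(2) that by simp
    also have "\<dots> \<le> (\<Sum>i\<le>m. Max (insert 0 (K i)))"
      by (rule member_le_sum) auto
    also have "\<dots> < \<phi> m"
      by (simp add: \<phi>_def)
    also have "\<dots> \<le> enumerate D (\<phi> m)"
      using assms(1) by (rule le_enumerate)
    finally show ?thesis
      by simp
  qed
qed

lemma open_contains_half_power_ball:
  fixes \<eta> :: "'a::metric_space"
  assumes "open U" "\<eta> \<in> U"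
  obtains N where "\<And>x n. N \<le> n \<Longrightarrow> dist x \<eta> \<le> (1/2) ^ n \<Longrightarrow> x \<in> U"
proof -
  obtain e where e: "e > 0" "ball \<eta> e \<subseteq> U"
    using assms openE by blast
  obtain N where N: "(1/2::real) ^ N < e"
    using real_arch_pow_inv[where x="1/2" and y=e] e(1) by auto
  have "x \<in> U" if "N \<le> n" "dist x \<eta> \<le> (1/2) ^ n" for x n
  proof -
    have "(1/2::real) ^ n \<le> (1/2) ^ N"
      using that(1) by (simp add: power_decreasing)
    with that(2) N have "dist x \<eta> < e"
      by linarith
    with e(2) show ?thesis
      by (auto simp: dist_commute)
  qed
  then show ?thesis
    by (rule that)
qed

definition pair_limit :: "(nat set \<Rightarrow> 'a::metric_space) \<Rightarrow> (nat \<Rightarrow> nat) \<Rightarrow> 'a" where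
  "pair_limit y \<gamma> = lim (\<lambda>n. y {\<gamma> n, \<gamma> (Suc n)})"

text \<open>The rate \<open>\<rho> i j = i\<close> describes \<open>r\<close>-limits and \<open>\<rho> i j = j\<close> describes \<open>\<R>\<close>-limits.
  Since the condition does not mention the limit, it defines a closed subset of the Baire space.\<close>
definition cauchy_at_rate :: "(nat \<Rightarrow> nat \<Rightarrow> nat) \<Rightarrow> (nat set \<Rightarrow> 'a::metric_space) \<Rightarrow> (nat \<Rightarrow> nat) \<Rightarrow> bool"
  where "cauchy_at_rate \<rho> y \<gamma> \<longleftrightarrow> strict_mono \<gamma> \<and>
    (\<forall>i j k l. i < j \<longrightarrow> k < l \<longrightarrow>
      dist (y {\<gamma> i, \<gamma> j}) (y {\<gamma> k, \<gamma> l}) \<le> (1/2) ^ min (\<rho> i j) (\<rho> k l))"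

lemma cauchy_at_rate_LIMSEQ:
  fixes y :: "nat set \<Rightarrow> 'a::complete_space"
  assumes rate: "\<And>n. n \<le> \<rho> n (Suc n)" and "cauchy_at_rate \<rho> y \<gamma>"
  shows "(\<lambda>n. y {\<gamma> n, \<gamma> (Suc n)}) \<longlonglongrightarrow> pair_limit y \<gamma>"
proof -
  have bound: "dist (y {\<gamma> m, \<gamma> (Suc m)}) (y {\<gamma> n, \<gamma> (Suc n)}) \<le> (1/2) ^ min m n" for m n
  proof -
    have "dist (y {\<gamma> m, \<gamma> (Suc m)}) (y {\<gamma> n, \<gamma> (Suc n)})
        \<le> (1/2) ^ min (\<rho> m (Suc m)) (\<rho> n (Suc n))"
      using assms(2) unfolding cauchy_at_rate_def by simp
    also have "\<dots> \<le> (1/2) ^ min m n"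
      using rate[of m] rate[of n] by (intro power_decreasing) auto
    finally show ?thesis .
  qed
  have "Cauchy (\<lambda>n. y {\<gamma> n, \<gamma> (Suc n)})"
  proof (rule metric_CauchyI)
    fix e :: real assume "e > 0"
    then obtain M where M: "(1/2::real) ^ M < e"
      using real_arch_pow_inv[where x="1/2" and y=e] by auto
    have "dist (y {\<gamma> m, \<gamma> (Suc m)}) (y {\<gamma> n, \<gamma> (Suc n)}) < e" if "M \<le> m" "M \<le> n" for m n
    proof -
      have "(1/2::real) ^ min m n \<le> (1/2) ^ M"
        using that by (simp add: power_decreasing)
      with bound[of m n] M show ?thesis
        by linarith
    qed
    then show "\<exists>M. \<forall>m\<ge>M. \<forall>n\<ge>M. dist (y {\<gamma> m, \<gamma> (Suc m)}) (y {\<gamma> n, \<gamma> (Suc n)}) < e"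
      by blast
  qed
  then show ?thesis
    unfolding pair_limit_def by (simp add: Cauchy_convergent_iff convergent_LIMSEQ_iff)
qed

lemma dist_pair_limit_le:
  fixes y :: "nat set \<Rightarrow> 'a::complete_space"
  assumes rate: "\<And>n. n \<le> \<rho> n (Suc n)" and "cauchy_at_rate \<rho> y \<gamma>" "i < j"
  shows "dist (y {\<gamma> i, \<gamma> j}) (pair_limit y \<gamma>) \<le> (1/2) ^ \<rho> i j"
proof -
  have "(\<lambda>n. dist (y {\<gamma> i, \<gamma> j}) (y {\<gamma> n, \<gamma> (Suc n)})) \<longlonglongrightarrow> dist (y {\<gamma> i, \<gamma> j}) (pair_limit y \<gamma>)"
    using cauchy_at_rate_LIMSEQ[OF rate assms(2)] by (intro tendsto_intros)
  moreover have "dist (y {\<gamma> i, \<gamma> j}) (y {\<gamma> n, \<gamma> (Suc n)}) \<le> (1/2) ^ \<rho> i j" if "\<rho> i j \<le> n" for n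
  proof -
    have "min (\<rho> i j) (\<rho> n (Suc n)) = \<rho> i j"
      using that rate[of n] by simp
    then show ?thesis
      using assms(2,3) unfolding cauchy_at_rate_def by (metis lessI)
  qed
  ultimately show ?thesis
    by (intro LIMSEQ_le_const2) auto
qed

lemma cauchy_at_rateI:
  fixes y :: "nat set \<Rightarrow> 'a::complete_space"
  assumes rate: "\<And>n. n \<le> \<rho> n (Suc n)" and "strict_mono \<gamma>"
    and bound: "\<And>i j. i < j \<Longrightarrow> dist (y {\<gamma> i, \<gamma> j}) \<eta> \<le> (1/2) ^ Suc (\<rho> i j)"
  shows "cauchy_at_rate \<rho> y \<gamma>" "pair_limit y \<gamma> = \<eta>"
proof -
  have "dist (y {\<gamma> i, \<gamma> j}) (y {\<gamma> k, \<gamma> l}) \<le> (1/2) ^ min (\<rho> i j) (\<rho> k l)"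
    if "i < j" "k < l" for i j k l
  proof -
    let ?m = "min (\<rho> i j) (\<rho> k l)"
    have "(1/2::real) ^ Suc (\<rho> i j) \<le> (1/2) ^ Suc ?m" "(1/2::real) ^ Suc (\<rho> k l) \<le> (1/2) ^ Suc ?m"
      by (intro power_decreasing; simp)+
    with bound[OF that(1)] bound[OF that(2)] have "dist (y {\<gamma> i, \<gamma> j}) (y {\<gamma> k, \<gamma> l}) \<le> 2 * (1/2) ^ Suc ?m"
      using dist_triangle2[of "y {\<gamma> i, \<gamma> j}" "y {\<gamma> k, \<gamma> l}" \<eta>] by linarith
    then show ?thesis
      by simp
  qed
  with assms(2) show "cauchy_at_rate \<rho> y \<gamma>"
    unfolding cauchy_at_rate_def by blast
  have "(\<lambda>n. y {\<gamma> n, \<gamma> (Suc n)}) \<longlonglongrightarrow> \<eta>"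
  proof (rule metric_LIMSEQ_I)
    fix e :: real assume "e > 0"
    then obtain M where M: "(1/2::real) ^ M < e"
      using real_arch_pow_inv[where x="1/2" and y=e] by auto
    have "dist (y {\<gamma> n, \<gamma> (Suc n)}) \<eta> < e" if "M \<le> n" for n
    proof -
      have "(1/2::real) ^ Suc (\<rho> n (Suc n)) \<le> (1/2) ^ M"
        using that rate[of n] by (intro power_decreasing) auto
      with bound[of n "Suc n"] M show ?thesis
        by linarith
    qed
    then show "\<exists>M. \<forall>n\<ge>M. dist (y {\<gamma> n, \<gamma> (Suc n)}) \<eta> < e"
      by blast
  qed
  then show "pair_limit y \<gamma> = \<eta>"
    unfolding pair_limit_def by (rule limI)
qed

lemma cauchy_at_rate_closed:
  assumes "\<And>n. \<exists>\<delta>. cauchy_at_rate \<rho> y \<delta> \<and> initial_segment n \<delta> = initial_segment n \<gamma>"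
  shows "cauchy_at_rate \<rho> y \<gamma>"
proof -
  have agree: "\<exists>\<delta>. cauchy_at_rate \<rho> y \<delta> \<and> (\<forall>i<n. \<delta> i = \<gamma> i)" for n
    using assms by (simp add: initial_segment_eq_iff)
  have "\<gamma> n < \<gamma> (Suc n)" for n
  proof -
    obtain \<delta> where \<delta>: "cauchy_at_rate \<rho> y \<delta>" "\<forall>i<Suc (Suc n). \<delta> i = \<gamma> i"
      using agree by blast
    then have "\<delta> n < \<delta> (Suc n)"
      unfolding cauchy_at_rate_def strict_mono_Suc_iff by blast
    with \<delta>(2) show ?thesis
      by simp
  qed
  then have "strict_mono \<gamma>"
    by (simp add: strict_mono_Suc_iff)
  moreover have "dist (y {\<gamma> i, \<gamma> j}) (y {\<gamma> k, \<gamma> l}) \<le> (1/2) ^ min (\<rho> i j) (\<rho> k l)"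
    if "i < j" "k < l" for i j k l
  proof -
    obtain \<delta> where \<delta>: "cauchy_at_rate \<rho> y \<delta>" "\<forall>i<Suc (j + l). \<delta> i = \<gamma> i"
      using agree by blast
    then have "dist (y {\<delta> i, \<delta> j}) (y {\<delta> k, \<delta> l}) \<le> (1/2) ^ min (\<rho> i j) (\<rho> k l)"
      using that unfolding cauchy_at_rate_def by blast
    moreover have "\<delta> i = \<gamma> i" "\<delta> j = \<gamma> j" "\<delta> k = \<gamma> k" "\<delta> l = \<gamma> l"
      using \<delta>(2) that by auto
    ultimately show ?thesis
      by simp
  qed
  ultimately show ?thesis
    unfolding cauchy_at_rate_def by blast
qed

lemma dist_pair_limit_initial_segment:
  fixes y :: "nat set \<Rightarrow> 'a::complete_space"
  assumes rate: "\<And>n. n \<le> \<rho> n (Suc n)"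
    and "cauchy_at_rate \<rho> y \<gamma>" "cauchy_at_rate \<rho> y \<delta>"
    and "initial_segment (Suc (Suc n)) \<gamma> = initial_segment (Suc (Suc n)) \<delta>"
  shows "dist (pair_limit y \<gamma>) (pair_limit y \<delta>) \<le> 2 * (1/2) ^ n"
proof -
  have near: "dist (y {\<sigma> n, \<sigma> (Suc n)}) (pair_limit y \<sigma>) \<le> (1/2) ^ n"
    if "cauchy_at_rate \<rho> y \<sigma>" for \<sigma>
  proof -
    have "(1/2::real) ^ \<rho> n (Suc n) \<le> (1/2) ^ n"
      using rate[of n] by (intro power_decreasing) auto
    with dist_pair_limit_le[OF rate that, of n "Suc n"] show ?thesis
      by linarith
  qed
  have "y {\<gamma> n, \<gamma> (Suc n)} = y {\<delta> n, \<delta> (Suc n)}"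
    using assms(4) by (simp add: initial_segment_eq_iff)
  with near[OF assms(2)] near[OF assms(3)]
    dist_triangle3[of "pair_limit y \<gamma>" "pair_limit y \<delta>" "y {\<gamma> n, \<gamma> (Suc n)}"]
  show ?thesis
    by simp
qed

lemma analytic_set_pair_limits:
  fixes y :: "nat set \<Rightarrow> 'a::complete_space"
  assumes rate: "\<And>n. n \<le> \<rho> n (Suc n)"
  shows "analytic_set (pair_limit y ` {\<gamma>. cauchy_at_rate \<rho> y \<gamma>})"
proof (rule analytic_set_image_closed)
  show "\<gamma> \<in> {\<gamma>. cauchy_at_rate \<rho> y \<gamma>}"
    if "\<And>n. \<exists>\<delta>\<in>{\<gamma>. cauchy_at_rate \<rho> y \<gamma>}. initial_segment n \<delta> = initial_segment n \<gamma>" for \<gamma>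
    using that by (auto intro: cauchy_at_rate_closed)
  fix e :: real assume "e > 0"
  then obtain n where n: "(1/2::real) ^ n < e / 2"
    using real_arch_pow_inv[where x="1/2" and y="e/2"] by auto
  have "dist (pair_limit y \<gamma>) (pair_limit y \<delta>) < e"
    if "cauchy_at_rate \<rho> y \<gamma>" "cauchy_at_rate \<rho> y \<delta>"
      "initial_segment (Suc (Suc n)) \<gamma> = initial_segment (Suc (Suc n)) \<delta>" for \<gamma> \<delta>
    using dist_pair_limit_initial_segment[OF rate that] n by linarith
  then show "\<exists>N. \<forall>\<gamma>\<in>{\<gamma>. cauchy_at_rate \<rho> y \<gamma>}. \<forall>\<delta>\<in>{\<gamma>. cauchy_at_rate \<rho> y \<gamma>}.
      initial_segment N \<gamma> = initial_segment N \<delta> \<longrightarrow> dist (pair_limit y \<gamma>) (pair_limit y \<delta>) < e"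
    by blast
qed

lemma pair_limit_in_r_limit_points:
  fixes y :: "nat set \<Rightarrow> 'a::complete_space"
  assumes "cauchy_at_rate (\<lambda>i j. i) y \<gamma>"
  shows "pair_limit y \<gamma> \<in> r_limit_points y"
proof -
  have "strict_mono \<gamma>"
    using assms unfolding cauchy_at_rate_def by blast
  then have "infinite (range \<gamma>)"
    using range_inj_infinite strict_mono_imp_inj_on by blast
  moreover have "r_tendsto y (range \<gamma>) (pair_limit y \<gamma>)"
    unfolding r_tendsto_def
  proof (intro allI impI)
    fix U assume "open U \<and> pair_limit y \<gamma> \<in> U"
    then have "open U" "pair_limit y \<gamma> \<in> U"
      by simp_all
    then obtain N where N: "\<And>x n. N \<le> n \<Longrightarrow> dist x (pair_limit y \<gamma>) \<le> (1/2) ^ n \<Longrightarrow> x \<in> U"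
      by (rule open_contains_half_power_ball) auto
    have "y s \<in> U" if s: "s \<in> pairs2 (range \<gamma> - \<gamma> ` {..<N})" for s
    proof -
      have "s \<in> pairs2 (range \<gamma>)"
        using s pairs2_mono[of "range \<gamma> - \<gamma> ` {..<N}"] by blast
      then obtain i j where ij: "i < j" "s = {\<gamma> i, \<gamma> j}"
        by (rule pairs2_range_cases)
      with s have "N \<le> i"
        by (auto simp: pairs2_def)
      with ij N dist_pair_limit_le[OF _ assms ij(1)] show ?thesis
        by simp
    qed
    then show "\<exists>K. finite K \<and> (\<forall>s\<in>pairs2 (range \<gamma> - K). y s \<in> U)"
      by blast
  qed
  ultimately show ?thesis
    unfolding r_limit_points_eq by blast
qed

lemma pair_limit_in_R_limit_points:
  fixes y :: "nat set \<Rightarrow> 'a::complete_space"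
  assumes "cauchy_at_rate (\<lambda>i j. j) y \<gamma>"
  shows "pair_limit y \<gamma> \<in> R_limit_points y"
proof -
  have "strict_mono \<gamma>"
    using assms unfolding cauchy_at_rate_def by blast
  then have "infinite (range \<gamma>)"
    using range_inj_infinite strict_mono_imp_inj_on by blast
  moreover have "pairs_tendsto y (range \<gamma>) (pair_limit y \<gamma>)"
    unfolding pairs_tendsto_def
  proof (intro allI impI)
    fix U assume "open U \<and> pair_limit y \<gamma> \<in> U"
    then have "open U" "pair_limit y \<gamma> \<in> U"
      by simp_all
    then obtain N where N: "\<And>x n. N \<le> n \<Longrightarrow> dist x (pair_limit y \<gamma>) \<le> (1/2) ^ n \<Longrightarrow> x \<in> U"
      by (rule open_contains_half_power_ball) auto
    have "s \<in> pairs2 (\<gamma> ` {..<N})" if s: "s \<in> pairs2 (range \<gamma>)" "y s \<notin> U" for s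
    proof -
      obtain i j where ij: "i < j" "s = {\<gamma> i, \<gamma> j}"
        using s(1) by (rule pairs2_range_cases)
      have "dist (y s) (pair_limit y \<gamma>) \<le> (1/2) ^ j"
        using dist_pair_limit_le[OF _ assms ij(1)] ij(2) by simp
      with s(2) N have "j < N"
        using not_le by blast
      with ij s(1) show ?thesis
        by (auto simp: pairs2_def)
    qed
    then have "{s\<in>pairs2 (range \<gamma>). y s \<notin> U} \<subseteq> pairs2 (\<gamma> ` {..<N})"
      by blast
    then show "finite {s\<in>pairs2 (range \<gamma>). y s \<notin> U}"
      by (rule finite_subset) (simp add: finite_pairs2)
  qed
  ultimately show ?thesis
    unfolding R_limit_points_eq by blast
qed

lemma r_limit_point_is_pair_limit:
  fixes y :: "nat set \<Rightarrow> 'a::complete_space"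
  assumes "\<eta> \<in> r_limit_points y"
  shows "\<eta> \<in> pair_limit y ` {\<gamma>. cauchy_at_rate (\<lambda>i j. i) y \<gamma>}"
proof -
  obtain D where D: "infinite D" "r_tendsto y D \<eta>"
    using assms unfolding r_limit_points_eq by blast
  have ball: "open (ball \<eta> ((1/2) ^ Suc m)) \<and> \<eta> \<in> ball \<eta> ((1/2) ^ Suc m)" for m
    by simp
  have "\<exists>K. finite K \<and> (\<forall>s\<in>pairs2 (D - K). y s \<in> ball \<eta> ((1/2) ^ Suc m))" for m
    using D(2) ball unfolding r_tendsto_def by blast
  then obtain K where K: "\<And>m. finite (K m)"
    and close: "\<And>m s. s \<in> pairs2 (D - K m) \<Longrightarrow> y s \<in> ball \<eta> ((1/2) ^ Suc m)"
    by metis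
  obtain \<gamma> where \<gamma>: "strict_mono \<gamma>" "\<And>m. \<gamma> m \<in> D" "\<And>m k. k \<in> K m \<Longrightarrow> k < \<gamma> m"
    by (rule strict_mono_enumeration_beyond[where K=K, OF D(1) K]) blast
  have bound: "dist (y {\<gamma> i, \<gamma> j}) \<eta> \<le> (1/2) ^ Suc i" if "i < j" for i j
  proof -
    have "\<gamma> i < \<gamma> j"
      using \<gamma>(1) that by (rule strict_monoD)
    moreover have "\<gamma> i \<notin> K i" "\<gamma> j \<notin> K i"
      using \<gamma>(3)[of "\<gamma> i" i] \<gamma>(3)[of "\<gamma> j" i] \<open>\<gamma> i < \<gamma> j\<close> by auto
    ultimately have "{\<gamma> i, \<gamma> j} \<in> pairs2 (D - K i)"
      using \<gamma>(2)[of i] \<gamma>(2)[of j] by (auto simp: pairs2_def)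
    then show ?thesis
      using close by (fastforce simp: dist_commute)
  qed
  have "cauchy_at_rate (\<lambda>i j. i) y \<gamma>" "pair_limit y \<gamma> = \<eta>"
    using cauchy_at_rateI[where \<rho>="\<lambda>i j. i", OF _ \<gamma>(1) bound] by simp_all
  then show ?thesis
    by blast
qed

lemma R_limit_point_is_pair_limit:
  fixes y :: "nat set \<Rightarrow> 'a::complete_space"
  assumes "\<eta> \<in> R_limit_points y"
  shows "\<eta> \<in> pair_limit y ` {\<gamma>. cauchy_at_rate (\<lambda>i j. j) y \<gamma>}"
proof -
  obtain D where D: "infinite D" "pairs_tendsto y D \<eta>"
    using assms unfolding R_limit_points_eq by blast
  define Far where "Far m = {s\<in>pairs2 D. y s \<notin> ball \<eta> ((1/2) ^ Suc m)}" for m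
  have ball: "open (ball \<eta> ((1/2) ^ Suc m)) \<and> \<eta> \<in> ball \<eta> ((1/2) ^ Suc m)" for m
    by simp
  have "finite (Far m)" for m
    using D(2) ball unfolding pairs_tendsto_def Far_def by blast
  moreover have "finite s" if "s \<in> Far m" for s m
    using that by (auto simp: Far_def pairs2_iff)
  ultimately have "finite (\<Union>(Far m))" for m
    by blast
  then obtain \<gamma> where \<gamma>: "strict_mono \<gamma>" "\<And>m. \<gamma> m \<in> D" "\<And>m k. k \<in> \<Union>(Far m) \<Longrightarrow> k < \<gamma> m"
    by (rule strict_mono_enumeration_beyond[where K="\<lambda>m. \<Union>(Far m)", OF D(1)]) blast
  have bound: "dist (y {\<gamma> i, \<gamma> j}) \<eta> \<le> (1/2) ^ Suc j" if "i < j" for i j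
  proof -
    have "\<gamma> i < \<gamma> j"
      using \<gamma>(1) that by (rule strict_monoD)
    then have "{\<gamma> i, \<gamma> j} \<in> pairs2 D"
      using \<gamma>(2)[of i] \<gamma>(2)[of j] by (auto simp: pairs2_def)
    moreover have "{\<gamma> i, \<gamma> j} \<notin> Far j"
      using \<gamma>(3)[of "\<gamma> j" j] by blast
    ultimately show ?thesis
      by (auto simp: Far_def dist_commute)
  qed
  have "cauchy_at_rate (\<lambda>i j. j) y \<gamma>" "pair_limit y \<gamma> = \<eta>"
    using cauchy_at_rateI[where \<rho>="\<lambda>i j. j", OF _ \<gamma>(1) bound] by simp_all
  then show ?thesis
    by blast
qed

lemma analytic_set_r_limit_points:
  fixes y :: "nat set \<Rightarrow> 'a::complete_space"
  shows "analytic_set (r_limit_points y)"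
proof -
  have "r_limit_points y = pair_limit y ` {\<gamma>. cauchy_at_rate (\<lambda>i j. i) y \<gamma>}"
    using r_limit_point_is_pair_limit pair_limit_in_r_limit_points by blast
  then show ?thesis
    using analytic_set_pair_limits[of "\<lambda>i j. i"] by simp
qed

lemma analytic_set_R_limit_points:
  fixes y :: "nat set \<Rightarrow> 'a::complete_space"
  shows "analytic_set (R_limit_points y)"
proof -
  have "R_limit_points y = pair_limit y ` {\<gamma>. cauchy_at_rate (\<lambda>i j. j) y \<gamma>}"
    using R_limit_point_is_pair_limit pair_limit_in_R_limit_points by blast
  then show ?thesis
    using analytic_set_pair_limits[of "\<lambda>i j. j"] by simp
qed

lemma limit_sets_eq_analytic_sets:
  assumes "\<And>y. analytic_set (\<Lambda> y)"
    and "\<And>C. analytic_set C \<Longrightarrow> C \<noteq> {} \<Longrightarrow> \<exists>y. C = \<Lambda> y"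
  shows "{A. \<exists>y. A = \<Lambda> y} \<union> {{}} = {A. analytic_set A}"
proof (intro set_eqI iffI)
  fix A
  show "A \<in> {A. analytic_set A}" if "A \<in> {A. \<exists>y. A = \<Lambda> y} \<union> {{}}"
    using that assms(1) by (auto simp: analytic_set_def)
  show "A \<in> {A. \<exists>y. A = \<Lambda> y} \<union> {{}}" if "A \<in> {A. analytic_set A}"
    using that assms(2) by (cases "A = {}") auto
qed

theorem theorem4p2:
  assumes "uncountable (UNIV :: 'a::polish_space set)"
  shows "(L_r :: 'a set set) = L_R \<and> (L_R :: 'a set set) = {A. analytic_set A} \<and>
    (\<forall>C :: 'a set. analytic_set C \<and> C \<noteq> {} \<longrightarrow>
       (\<exists>y. C = r_limit_points y \<and> C = R_limit_points y))"
proof -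
  have realised: "\<exists>y. C = r_limit_points y \<and> C = R_limit_points y"
    if C: "analytic_set C" "C \<noteq> {}" for C :: "'a set"
  proof -
    obtain f :: "(nat \<Rightarrow> nat) \<Rightarrow> 'a" where "continuous_on UNIV f" "range f = C"
      using C unfolding analytic_set_def by blast
    then have "C = r_limit_points (tree_sequence f)" "C = R_limit_points (tree_sequence f)"
      by (simp_all add: limit_points_tree_sequence)
    then show ?thesis
      by blast
  qed
  have "L_r = {A :: 'a set. analytic_set A}"
    unfolding L_r_def using realised
    by (intro limit_sets_eq_analytic_sets analytic_set_r_limit_points) blast
  moreover have "L_R = {A :: 'a set. analytic_set A}"
    unfolding L_R_def using realised
    by (intro limit_sets_eq_analytic_sets analytic_set_R_limit_points) blast
  ultimately show ?thesis
    using realised by simp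
qed

end
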